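(* Let there be $m$ workers and $n$ factories. Each worker $i\in[m]$ has a utility function $u_i\colon[n]\times\mathbb{R}_{\ge0}^n\to\mathbb{R}_{\ge0}$ such that $\boldsymbol{x}\mapsto u_i(j,\boldsymbol{x})$ is continuous for each $j$, and $u_i(j,\boldsymbol{x})=0$ whenever $x_j=0$. Let $k_1,\ldots,k_n$ be nonnegative integers with $\sum_{j=1}^n k_j=m$ and let $B>0$. Then there exists a wage vector $\boldsymbol{x}\in\mathbb{R}_{\ge0}^n$ with $\sum_{j=1}^n k_jx_j=B$ and an assignment of the workers to the factories in which exactly $k_j$ workers are assigned to each factory $j$ and every worker is happy, i.e., each worker $i$ assigned to factory $j$ satisfies $u_i(j,\boldsymbol{x})\ge u_i(j',\boldsymbol{x})$ for all $j'\in[n]$.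
   Context: Here $x_j$ is the (common) wage of a worker at factory $j$, and $u_i(j,\boldsymbol{x})$ is the utility for worker $i$ of working at factory $j$ when the wages are given by $\boldsymbol{x}$. *)

theory Defs
  imports "HOL-Analysis.Analysis"
begin

end

theory Submission
  imports Defs
begin

text \<open>
  For \<open>\<epsilon> > 0\<close> let every worker spread itself over the factories whose utility is within \<open>\<epsilon>\<close>
  of its best one, with weights that depend continuously on the wages and vanish at zero wage.
  Brouwer's fixed point theorem, applied to a map raising the wages of under-demanded factories
  inside the compact convex set of wage vectors with total payroll \<open>B\<close>, gives wages at which the
  fractional demand for factory \<open>j\<close> is exactly \<open>k j\<close>. Hall's theorem with capacities rounds
  this fractional assignment to an integral one inside its support, which is an
  \<open>\<epsilon>\<close>-equilibrium. As \<open>\<epsilon> \<rightarrow> 0\<close>, a subsequence of these has a constant assignment and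
  convergent wages, and the limit is an exact equilibrium.
\<close>

section \<open>Wage vectors\<close>

text \<open>Wages of factories without positions are fixed to \<open>0\<close>; this makes the set compact.\<close>

definition wage_set :: "('n::finite \<Rightarrow> nat) \<Rightarrow> real \<Rightarrow> (real^'n) set" where
  "wage_set k B = {x. (\<forall>j. 0 \<le> x$j) \<and> (\<forall>j. k j = 0 \<longrightarrow> x$j = 0) \<and>
                      (\<Sum>j\<in>UNIV. real (k j) * x$j) = B}"

lemma wage_set_closed: "closed (wage_set k B)"
  unfolding wage_set_def
  by (intro closed_Collect_conj closed_Collect_all closed_Collect_imp closed_Collect_le
      closed_Collect_eq continuous_intros open_Collect_const)

lemma wage_set_subset_cbox: "wage_set k B \<subseteq> cbox 0 (\<chi> j. B)"
proof
  fix x assume x: "x \<in> wage_set k B"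
  then have nonneg: "\<And>j. 0 \<le> x$j" and sum: "(\<Sum>j\<in>UNIV. real (k j) * x$j) = B"
    by (auto simp: wage_set_def)
  have "x$j \<le> B" for j
  proof -
    have "x$j \<le> real (k j) * x$j"
      using x nonneg[of j] by (cases "k j") (auto simp: wage_set_def algebra_simps)
    also have "\<dots> \<le> B"
      unfolding sum[symmetric] by (rule member_le_sum) (auto simp: nonneg)
    finally show ?thesis .
  qed
  then show "x \<in> cbox 0 (\<chi> j. B)"
    by (simp add: mem_box_cart nonneg)
qed

lemma wage_set_compact: "compact (wage_set k B)"
  using wage_set_closed wage_set_subset_cbox
  by (metis bounded_cbox bounded_subset compact_eq_bounded_closed)

lemma wage_set_convex:
  fixes k :: "'n::finite \<Rightarrow> nat"
  shows "convex (wage_set k B)"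
  unfolding convex_def
proof (intro ballI allI impI)
  fix x y :: "real^'n" and a b :: real
  assume x: "x \<in> wage_set k B" and y: "y \<in> wage_set k B" and ab: "0 \<le> a" "0 \<le> b" "a + b = 1"
  have "(\<Sum>j\<in>UNIV. real (k j) * (a * x$j + b * y$j))
        = a * (\<Sum>j\<in>UNIV. real (k j) * x$j) + b * (\<Sum>j\<in>UNIV. real (k j) * y$j)"
    by (simp add: sum.distrib sum_distrib_left algebra_simps)
  also have "\<dots> = B"
    using x y ab by (simp add: wage_set_def flip: distrib_right)
  finally show "a *\<^sub>R x + b *\<^sub>R y \<in> wage_set k B"
    using x y ab by (auto simp: wage_set_def)
qed

lemma wage_set_nonempty:
  fixes k :: "'n::finite \<Rightarrow> nat"
  assumes "0 < k j0" "0 \<le> B"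
  shows "wage_set k B \<noteq> {}"
proof -
  define x :: "real^'n" where "x = (\<chi> j. if j = j0 then B / real (k j0) else 0)"
  have "(\<Sum>j\<in>UNIV. real (k j) * x$j) = real (k j0) * (B / real (k j0))"
    unfolding x_def by (simp add: if_distrib cong: if_cong)
  then have "x \<in> wage_set k B"
    using assms by (auto simp: wage_set_def x_def)
  then show ?thesis by blast
qed

lemma wage_set_ex_pos:
  assumes "x \<in> wage_set k B" "B \<noteq> 0"
  shows "\<exists>l. 0 < x$l"
proof (rule ccontr)
  assume "\<not> (\<exists>l. 0 < x$l)"
  then have "x$l \<le> 0" for l by (simp add: not_less)
  then have "\<And>l. x$l = 0"
    using assms(1) unfolding wage_set_def by (force intro: order_antisym)
  then show False
    using assms by (simp add: wage_set_def)
qed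

section \<open>Soft choice\<close>

definition soft_weight :: "('n::finite \<Rightarrow> real^'n \<Rightarrow> real) \<Rightarrow> real \<Rightarrow> 'n \<Rightarrow> real^'n \<Rightarrow> real" where
  "soft_weight v \<epsilon> j x = x$j * (\<Prod>l\<in>UNIV. max 0 (v j x - v l x + \<epsilon>))"

definition soft_choice :: "('n::finite \<Rightarrow> real^'n \<Rightarrow> real) \<Rightarrow> real \<Rightarrow> 'n \<Rightarrow> real^'n \<Rightarrow> real" where
  "soft_choice v \<epsilon> j x = soft_weight v \<epsilon> j x / (\<Sum>l\<in>UNIV. soft_weight v \<epsilon> l x)"

lemma soft_weight_nonneg: "0 \<le> x$j \<Longrightarrow> 0 \<le> soft_weight v \<epsilon> j x"
  unfolding soft_weight_def by (intro mult_nonneg_nonneg prod_nonneg) auto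

lemma soft_weight_nonzero_imp:
  assumes "soft_weight v \<epsilon> j x \<noteq> 0"
  shows "v l x - \<epsilon> < v j x"
proof -
  have "max 0 (v j x - v l x + \<epsilon>) \<noteq> 0"
    using assms by (auto simp: soft_weight_def prod_zero_iff)
  then show ?thesis by (simp add: max_def split: if_splits)
qed

lemma sum_soft_weight_pos:
  assumes nonneg: "\<And>l. 0 \<le> x$l" and "\<exists>l. 0 < x$l" and "0 < \<epsilon>"
    and v_nonneg: "\<And>l. 0 \<le> v l x" and v_zero: "\<And>l. x$l = 0 \<Longrightarrow> v l x = 0"
  shows "0 < (\<Sum>l\<in>UNIV. soft_weight v \<epsilon> l x)"
proof -
  obtain l0 where l0: "0 < x$l0" using assms(2) by blast
  have "Max (range (\<lambda>l. v l x)) \<in> range (\<lambda>l. v l x)" by (rule Max_in) auto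
  then obtain jm where jm: "v jm x = Max (range (\<lambda>l. v l x))" by (metis rangeE)
  have jm_max: "v l x \<le> v jm x" for l unfolding jm by (rule Max_ge) auto
  obtain j where j: "0 < x$j" "\<And>l. v l x \<le> v j x"
  proof (cases "0 < x$jm")
    case True then show ?thesis using that jm_max by blast
  next
    case False
    then have "v jm x = 0" using nonneg[of jm] v_zero by force
    then have "v l x \<le> v l0 x" for l using jm_max[of l] v_nonneg[of l0] by linarith
    then show ?thesis using that l0 by blast
  qed
  have "0 < max 0 (v j x - v l x + \<epsilon>)" for l
    using j(2)[of l] \<open>0 < \<epsilon>\<close> by simp
  then have "0 < soft_weight v \<epsilon> j x"
    unfolding soft_weight_def using j(1) by (simp add: prod_pos)
  then show ?thesis
    by (intro sum_pos2[where i=j]) (auto simp: soft_weight_nonneg nonneg)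
qed

lemma soft_choice_nonneg: "(\<And>l. 0 \<le> x$l) \<Longrightarrow> 0 \<le> soft_choice v \<epsilon> j x"
  unfolding soft_choice_def by (simp add: soft_weight_nonneg sum_nonneg)

lemma soft_choice_eq_0: "x$j = 0 \<Longrightarrow> soft_choice v \<epsilon> j x = 0"
  unfolding soft_choice_def soft_weight_def by simp

lemma soft_choice_nonzero_imp: "soft_choice v \<epsilon> j x \<noteq> 0 \<Longrightarrow> v l x - \<epsilon> < v j x"
  unfolding soft_choice_def by (auto intro: soft_weight_nonzero_imp)

lemma sum_soft_choice:
  "0 < (\<Sum>l\<in>UNIV. soft_weight v \<epsilon> l x) \<Longrightarrow> (\<Sum>j\<in>UNIV. soft_choice v \<epsilon> j x) = 1"
  unfolding soft_choice_def by (simp flip: sum_divide_distrib)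

lemma continuous_on_soft_choice:
  assumes "\<And>l. continuous_on S (v l)" and "\<And>x. x \<in> S \<Longrightarrow> 0 < (\<Sum>l\<in>UNIV. soft_weight v \<epsilon> l x)"
  shows "continuous_on S (soft_choice v \<epsilon> j)"
  unfolding soft_choice_def[abs_def] soft_weight_def
  using assms(2)[unfolded soft_weight_def] by (intro continuous_intros assms(1)) force

section \<open>Hall's theorem with capacities\<close>

definition hall_condition :: "'a set \<Rightarrow> ('a \<Rightarrow> 'b::finite set) \<Rightarrow> ('b \<Rightarrow> nat) \<Rightarrow> bool" where
  "hall_condition I N k \<longleftrightarrow> (\<forall>W\<subseteq>I. card W \<le> (\<Sum>j\<in>\<Union>(N ` W). k j))"

definition feasible_assignment :: "'a set \<Rightarrow> ('a \<Rightarrow> 'b set) \<Rightarrow> ('b \<Rightarrow> nat) \<Rightarrow> ('a \<Rightarrow> 'b) \<Rightarrow> bool" where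
  "feasible_assignment I N k \<sigma> \<longleftrightarrow> (\<forall>i\<in>I. \<sigma> i \<in> N i) \<and> (\<forall>j. card {i\<in>I. \<sigma> i = j} \<le> k j)"

lemma hall_condition_diff_tight:
  assumes "finite I" and hall: "hall_condition I N k" and "W \<subseteq> I"
    and tight: "card W = (\<Sum>j\<in>\<Union>(N ` W). k j)"
  shows "hall_condition (I - W) N (\<lambda>j. if j \<in> \<Union>(N ` W) then 0 else k j)"
  unfolding hall_condition_def
proof (intro allI impI)
  fix V assume V: "V \<subseteq> I - W"
  define NW where "NW = \<Union>(N ` W)"
  have "card V + card W = card (V \<union> W)"
    using V \<open>W \<subseteq> I\<close> \<open>finite I\<close> finite_subset[of _ I] by (subst card_Un_disjoint) auto
  also have "\<dots> \<le> (\<Sum>j\<in>\<Union>(N ` (V \<union> W)). k j)"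
    using V \<open>W \<subseteq> I\<close> by (intro hall[unfolded hall_condition_def, rule_format]) blast
  also have "\<Union>(N ` (V \<union> W)) = (\<Union>(N ` V) - NW) \<union> NW"
    unfolding NW_def by auto
  also have "(\<Sum>j\<in>(\<Union>(N ` V) - NW) \<union> NW. k j) = (\<Sum>j\<in>\<Union>(N ` V) - NW. k j) + card W"
    using tight unfolding NW_def by (subst sum.union_disjoint) auto
  also have "(\<Sum>j\<in>\<Union>(N ` V) - NW. k j) = (\<Sum>j\<in>\<Union>(N ` V). if j \<in> NW then 0 else k j)"
    by (rule sum.mono_neutral_cong_left) auto
  finally show "card V \<le> (\<Sum>j\<in>\<Union>(N ` V). if j \<in> \<Union>(N ` W) then 0 else k j)"
    unfolding NW_def by simp
qed

lemma hall_condition_diff_single: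
  assumes strict: "\<And>W. W \<noteq> {} \<Longrightarrow> W \<subset> I \<Longrightarrow> card W < (\<Sum>j\<in>\<Union>(N ` W). k j)"
    and "i0 \<in> I" "0 < k j0"
  shows "hall_condition (I - {i0}) N (k(j0 := k j0 - 1))"
  unfolding hall_condition_def
proof (intro allI impI)
  fix W assume W: "W \<subseteq> I - {i0}"
  have "(\<Sum>j\<in>\<Union>(N ` W). k j) \<le> (\<Sum>j\<in>\<Union>(N ` W). (k(j0 := k j0 - 1)) j + (if j = j0 then 1 else 0))"
    using \<open>0 < k j0\<close> by (intro sum_mono) simp
  also have "\<dots> \<le> (\<Sum>j\<in>\<Union>(N ` W). (k(j0 := k j0 - 1)) j) + 1"
    by (simp add: sum.distrib)
  finally have "(\<Sum>j\<in>\<Union>(N ` W). k j) \<le> (\<Sum>j\<in>\<Union>(N ` W). (k(j0 := k j0 - 1)) j) + 1" .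
  moreover have "W \<noteq> {} \<Longrightarrow> card W < (\<Sum>j\<in>\<Union>(N ` W). k j)"
    using strict W \<open>i0 \<in> I\<close> by blast
  ultimately show "card W \<le> (\<Sum>j\<in>\<Union>(N ` W). (k(j0 := k j0 - 1)) j)"
    by (cases "W = {}") auto
qed

lemma feasible_assignment_glue:
  assumes "finite I" "W \<subseteq> I"
    and \<sigma>1: "feasible_assignment W N k \<sigma>1"
    and \<sigma>2: "feasible_assignment (I - W) N (\<lambda>j. if j \<in> \<Union>(N ` W) then 0 else k j) \<sigma>2"
  shows "feasible_assignment I N k (\<lambda>i. if i \<in> W then \<sigma>1 i else \<sigma>2 i)"
  unfolding feasible_assignment_def
proof (intro conjI allI)
  show "\<forall>i\<in>I. (if i \<in> W then \<sigma>1 i else \<sigma>2 i) \<in> N i"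
    using \<sigma>1 \<sigma>2 by (simp add: feasible_assignment_def)
  fix j
  have fibre: "{i\<in>I. (if i \<in> W then \<sigma>1 i else \<sigma>2 i) = j} = {i\<in>W. \<sigma>1 i = j} \<union> {i\<in>I - W. \<sigma>2 i = j}"
    using \<open>W \<subseteq> I\<close> by auto
  have "finite W"
    using assms(2,1) by (rule finite_subset)
  then have card: "card {i\<in>I. (if i \<in> W then \<sigma>1 i else \<sigma>2 i) = j}
                   = card {i\<in>W. \<sigma>1 i = j} + card {i\<in>I - W. \<sigma>2 i = j}"
    unfolding fibre using \<open>finite I\<close> by (intro card_Un_disjoint) auto
  have le1: "card {i\<in>W. \<sigma>1 i = j} \<le> k j"
    and le2: "card {i\<in>I - W. \<sigma>2 i = j} \<le> (if j \<in> \<Union>(N ` W) then 0 else k j)"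
    using \<sigma>1 \<sigma>2 by (simp_all add: feasible_assignment_def)
  show "card {i\<in>I. (if i \<in> W then \<sigma>1 i else \<sigma>2 i) = j} \<le> k j"
  proof (cases "j \<in> \<Union>(N ` W)")
    case True
    then show ?thesis using card le1 le2 by simp
  next
    case False
    then have "{i\<in>W. \<sigma>1 i = j} = {}"
      using \<sigma>1 by (auto simp: feasible_assignment_def)
    then have "card {i\<in>W. \<sigma>1 i = j} = 0"
      by (simp only: card.empty)
    then show ?thesis using card le2 False by simp
  qed
qed

lemma feasible_assignment_update:
  assumes "finite I" "i0 \<in> I" "j0 \<in> N i0" "0 < k j0"
    and \<sigma>: "feasible_assignment (I - {i0}) N (k(j0 := k j0 - 1)) \<sigma>"
  shows "feasible_assignment I N k (\<sigma>(i0 := j0))"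
  unfolding feasible_assignment_def
proof (intro conjI allI)
  show "\<forall>i\<in>I. (\<sigma>(i0 := j0)) i \<in> N i"
    using \<sigma> \<open>j0 \<in> N i0\<close> by (simp add: feasible_assignment_def)
  fix j
  have le: "card {i\<in>I - {i0}. \<sigma> i = j} \<le> (k(j0 := k j0 - 1)) j"
    using \<sigma> by (simp add: feasible_assignment_def)
  show "card {i\<in>I. (\<sigma>(i0 := j0)) i = j} \<le> k j"
  proof (cases "j = j0")
    case True
    then have "{i\<in>I. (\<sigma>(i0 := j0)) i = j} = insert i0 {i\<in>I - {i0}. \<sigma> i = j}"
      using \<open>i0 \<in> I\<close> by auto
    then show ?thesis
      using le True \<open>0 < k j0\<close> \<open>finite I\<close> by (simp add: card_insert_if)
  next
    case False
    then have "{i\<in>I. (\<sigma>(i0 := j0)) i = j} = {i\<in>I - {i0}. \<sigma> i = j}"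
      by auto
    then show ?thesis using le False by simp
  qed
qed

text \<open>
  Halmos--Vaughan induction: if some nonempty proper subset of workers is tight, assign it and
  the rest separately; otherwise the slack lets any worker take any admissible position with
  positive capacity.
\<close>

theorem capacitated_hall:
  assumes "finite I" "hall_condition I N k"
  shows "\<exists>\<sigma>. feasible_assignment I N k \<sigma>"
  using assms
proof (induction I arbitrary: k rule: finite_psubset_induct)
  case (psubset I)
  have hall: "card W \<le> (\<Sum>j\<in>\<Union>(N ` W). k j)" if "W \<subseteq> I" for W
    using psubset.prems that unfolding hall_condition_def by simp
  show ?case
  proof (cases "\<exists>W. W \<noteq> {} \<and> W \<subset> I \<and> card W = (\<Sum>j\<in>\<Union>(N ` W). k j)")
    case True
    then obtain W where W: "W \<noteq> {}" "W \<subset> I" "card W = (\<Sum>j\<in>\<Union>(N ` W). k j)"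
      by blast
    have "hall_condition W N k"
      unfolding hall_condition_def using hall W(2) by auto
    then obtain \<sigma>1 where \<sigma>1: "feasible_assignment W N k \<sigma>1"
      using psubset.IH[OF W(2)] by blast
    have "I - W \<subset> I"
      using W(1,2) by blast
    moreover have "hall_condition (I - W) N (\<lambda>j. if j \<in> \<Union>(N ` W) then 0 else k j)"
      using psubset.hyps psubset.prems psubset_imp_subset[OF W(2)] W(3)
      by (rule hall_condition_diff_tight)
    ultimately obtain \<sigma>2
      where \<sigma>2: "feasible_assignment (I - W) N (\<lambda>j. if j \<in> \<Union>(N ` W) then 0 else k j) \<sigma>2"
      by (elim psubset.IH[THEN exE])
    have "feasible_assignment I N k (\<lambda>i. if i \<in> W then \<sigma>1 i else \<sigma>2 i)"
      using psubset.hyps psubset_imp_subset[OF W(2)] \<sigma>1 \<sigma>2 by (rule feasible_assignment_glue)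
    then show ?thesis by blast
  next
    case False
    show ?thesis
    proof (cases "I = {}")
      case True
      then show ?thesis by (simp add: feasible_assignment_def)
    next
      case nonempty: False
      have strict: "card W < (\<Sum>j\<in>\<Union>(N ` W). k j)" if "W \<noteq> {}" "W \<subset> I" for W
      proof -
        have "card W \<noteq> (\<Sum>j\<in>\<Union>(N ` W). k j)"
          using False that by blast
        then show ?thesis
          using hall[OF psubset_imp_subset[OF that(2)]] by linarith
      qed
      obtain i0 where "i0 \<in> I"
        using nonempty by blast
      then have "1 \<le> (\<Sum>j\<in>N i0. k j)"
        using hall[of "{i0}"] by simp
      then have "\<not> (\<forall>j\<in>N i0. k j = 0)"
        using sum.neutral[of "N i0" k] by linarith
      then obtain j0 where j0: "j0 \<in> N i0" "0 < k j0"
        by blast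
      have "I - {i0} \<subset> I"
        using \<open>i0 \<in> I\<close> by blast
      moreover have "hall_condition (I - {i0}) N (k(j0 := k j0 - 1))"
        using strict \<open>i0 \<in> I\<close> j0(2) by (rule hall_condition_diff_single)
      ultimately obtain \<sigma> where "feasible_assignment (I - {i0}) N (k(j0 := k j0 - 1)) \<sigma>"
        by (elim psubset.IH[THEN exE])
      then have "feasible_assignment I N k (\<sigma>(i0 := j0))"
        using psubset.hyps \<open>i0 \<in> I\<close> j0 by (intro feasible_assignment_update)
      then show ?thesis by blast
    qed
  qed
qed

lemma hall_condition_support:
  fixes A :: "'a::finite \<Rightarrow> 'b::finite \<Rightarrow> real"
  assumes nonneg: "\<And>i j. 0 \<le> A i j"
    and rows: "\<And>i. (\<Sum>j\<in>UNIV. A i j) = 1"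
    and cols: "\<And>j. (\<Sum>i\<in>UNIV. A i j) = real (k j)"
  shows "hall_condition UNIV (\<lambda>i. {j. 0 < A i j}) k"
  unfolding hall_condition_def
proof (intro allI impI)
  fix W :: "'a set"
  define NW where "NW = (\<Union>i\<in>W. {j. 0 < A i j})"
  have "real (card W) = (\<Sum>i\<in>W. \<Sum>j\<in>UNIV. A i j)"
    using rows by simp
  also have "\<dots> = (\<Sum>i\<in>W. \<Sum>j\<in>NW. A i j)"
    using nonneg unfolding NW_def
    by (intro sum.cong refl sum.mono_neutral_right) (auto simp: order_le_less)
  also have "\<dots> = (\<Sum>j\<in>NW. \<Sum>i\<in>W. A i j)"
    by (rule sum.swap)
  also have "\<dots> \<le> (\<Sum>j\<in>NW. \<Sum>i\<in>UNIV. A i j)"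
    by (intro sum_mono sum_mono2) (auto simp: nonneg)
  also have "\<dots> = real (\<Sum>j\<in>NW. k j)"
    using cols by simp
  finally show "card W \<le> (\<Sum>j\<in>\<Union>((\<lambda>i. {j. 0 < A i j}) ` W). k j)"
    unfolding NW_def by linarith
qed

lemma card_fibres_eq_if_le:
  fixes \<sigma> :: "'a::finite \<Rightarrow> 'b::finite"
  assumes le: "\<And>j. card {i. \<sigma> i = j} \<le> k j" and total: "(\<Sum>j\<in>UNIV. k j) = CARD('a)"
  shows "card {i. \<sigma> i = j} = k j"
proof -
  have "CARD('a) = card (\<Union>j. {i. \<sigma> i = j})"
    by (rule arg_cong[where f = card]) auto
  also have "\<dots> = (\<Sum>j\<in>UNIV. card {i. \<sigma> i = j})"
    by (rule card_UN_disjoint) auto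
  finally show ?thesis
    using total le by (intro sum_mono_inv[of "\<lambda>j. card {i. \<sigma> i = j}" UNIV k]) auto
qed

lemma fractional_assignment_rounding:
  fixes A :: "'a::finite \<Rightarrow> 'b::finite \<Rightarrow> real"
  assumes nonneg: "\<And>i j. 0 \<le> A i j"
    and rows: "\<And>i. (\<Sum>j\<in>UNIV. A i j) = 1"
    and cols: "\<And>j. (\<Sum>i\<in>UNIV. A i j) = real (k j)"
  obtains \<sigma> where "\<And>i. 0 < A i (\<sigma> i)" "\<And>j. card {i. \<sigma> i = j} = k j"
proof -
  obtain \<sigma> where \<sigma>: "feasible_assignment UNIV (\<lambda>i. {j. 0 < A i j}) k \<sigma>"
    using capacitated_hall[OF finite hall_condition_support[OF assms]] by blast
  have "real (\<Sum>j\<in>UNIV. k j) = (\<Sum>j\<in>UNIV. \<Sum>i\<in>UNIV. A i j)"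
    using cols by simp
  also have "\<dots> = (\<Sum>i\<in>UNIV. \<Sum>j\<in>UNIV. A i j)"
    by (rule sum.swap)
  also have "\<dots> = real CARD('a)"
    using rows by simp
  finally have "(\<Sum>j\<in>UNIV. k j) = CARD('a)"
    by linarith
  then show ?thesis
    using \<sigma> card_fibres_eq_if_le[of \<sigma> k] by (intro that) (auto simp: feasible_assignment_def)
qed

section \<open>Market clearing wages\<close>

lemma wage_update_in_wage_set:
  fixes e :: "'n::finite \<Rightarrow> real"
  assumes x: "x \<in> wage_set k B" and "0 \<le> B"
    and e_nonneg: "\<And>j. 0 \<le> e j" and e_zero: "\<And>j. k j = 0 \<Longrightarrow> e j = 0"
  shows "(\<chi> j. (x$j + B / real (k j) * e j) / (1 + sum e UNIV)) \<in> wage_set k B"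
proof -
  let ?y = "\<chi> j. (x$j + B / real (k j) * e j) / (1 + sum e UNIV)"
  have d: "0 < 1 + sum e UNIV"
    using e_nonneg by (simp add: sum_nonneg add_pos_nonneg)
  have nonneg: "\<And>j. 0 \<le> x$j" and zero: "\<And>j. k j = 0 \<Longrightarrow> x$j = 0"
    and total: "(\<Sum>j\<in>UNIV. real (k j) * x$j) = B"
    using x by (auto simp: wage_set_def)
  have "real (k j) * (B / real (k j) * e j) = B * e j" for j
    using e_zero[of j] by (cases "k j = 0") simp_all
  then have "real (k j) * ?y$j = (real (k j) * x$j + B * e j) / (1 + sum e UNIV)" for j
    by (simp only: vec_lambda_beta times_divide_eq_right distrib_left)
  then have "(\<Sum>j\<in>UNIV. real (k j) * ?y$j)
             = (\<Sum>j\<in>UNIV. (real (k j) * x$j + B * e j) / (1 + sum e UNIV))"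
    by (rule sum.cong[OF refl])
  also have "\<dots> = (\<Sum>j\<in>UNIV. real (k j) * x$j + B * e j) / (1 + sum e UNIV)"
    by (rule sum_divide_distrib[symmetric])
  also have "\<dots> = B"
    using total d by (simp add: sum.distrib field_simps flip: sum_distrib_left)
  finally show ?thesis
    using nonneg zero e_nonneg d \<open>0 \<le> B\<close> by (auto simp: wage_set_def)
qed

text \<open>
  At a fixed point of the wage update the total shortfall of demand \<open>F\<close> below supply \<open>p\<close>
  vanishes: otherwise some factory is over-demanded, hence has zero shortfall, hence zero wage
  by the fixed point equation, hence zero demand.
\<close>

lemma shares_eq_of_fixed_point:
  fixes F p c :: "'n::finite \<Rightarrow> real" and x :: "real^'n"
  assumes F_sum: "sum F UNIV = 1" and p_sum: "sum p UNIV = 1" and p_nonneg: "\<And>j. 0 \<le> p j"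
    and F_zero: "\<And>j. x$j = 0 \<Longrightarrow> F j = 0"
    and fixed: "\<And>j. x$j * (\<Sum>l\<in>UNIV. max 0 (p l - F l)) = c j * max 0 (p j - F j)"
  shows "F = p"
proof -
  define S where "S = (\<Sum>l\<in>UNIV. max 0 (p l - F l))"
  have "S = 0"
  proof (rule ccontr)
    assume "S \<noteq> 0"
    have "\<exists>j. F j < p j"
    proof (rule ccontr)
      assume "\<not> (\<exists>j. F j < p j)"
      then have "\<And>j. max 0 (p j - F j) = 0"
        by (simp add: not_less)
      then show False
        using \<open>S \<noteq> 0\<close> by (simp add: S_def)
    qed
    then obtain j where "F j < p j" ..
    have "\<exists>j'. p j' < F j'"
    proof (rule ccontr)
      assume "\<not> (\<exists>j'. p j' < F j')"
      then have "sum F UNIV < sum p UNIV"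
        using \<open>F j < p j\<close> by (intro sum_strict_mono_ex1) (auto simp: not_less)
      then show False
        using F_sum p_sum by simp
    qed
    then obtain j' where "p j' < F j'" ..
    then have "x$j' * S = 0"
      using fixed[of j'] by (simp add: S_def)
    then have "F j' = 0"
      using \<open>S \<noteq> 0\<close> F_zero by simp
    then show False
      using \<open>p j' < F j'\<close> p_nonneg[of j'] by simp
  qed
  then have "max 0 (p j - F j) = 0" for j
    by (simp add: S_def sum_nonneg_eq_0_iff)
  then have "p j \<le> F j" for j
    using max.cobounded2[of "p j - F j" 0] by simp
  then show "F = p"
    using F_sum p_sum by (intro ext sum_mono_inv[of p UNIV F, symmetric]) auto
qed

lemma market_clearing_wages:
  fixes F :: "'n::finite \<Rightarrow> real^'n \<Rightarrow> real" and k :: "'n \<Rightarrow> nat"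
  assumes cont: "\<And>j. continuous_on (wage_set k B) (F j)"
    and nonneg: "\<And>j x. x \<in> wage_set k B \<Longrightarrow> 0 \<le> F j x"
    and total: "\<And>x. x \<in> wage_set k B \<Longrightarrow> (\<Sum>j\<in>UNIV. F j x) = 1"
    and zero: "\<And>j x. x \<in> wage_set k B \<Longrightarrow> x$j = 0 \<Longrightarrow> F j x = 0"
    and "0 < B" and "0 < k j0"
  obtains x where "x \<in> wage_set k B" "\<And>j. F j x = real (k j) / real (\<Sum>l\<in>UNIV. k l)"
proof -
  define p where "p j = real (k j) / real (\<Sum>l\<in>UNIV. k l)" for j
  define e where "e x j = max 0 (p j - F j x)" for x j
  \<comment> \<open>raise the wages of under-demanded factories, then rescale to payroll \<open>B\<close>\<close>
  define G where "G x = (\<chi> j. (x$j + B / real (k j) * e x j) / (1 + sum (e x) UNIV))" for x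
  have p_sum: "sum p UNIV = 1"
    using \<open>0 < k j0\<close> by (auto simp: p_def simp flip: sum_divide_distrib of_nat_sum)
  have p_nonneg: "0 \<le> p j" for j
    by (simp add: p_def sum_nonneg)
  have e_nonneg: "0 \<le> e x j" for x j
    by (simp add: e_def)
  have G_maps: "G x \<in> wage_set k B" if "x \<in> wage_set k B" for x
    unfolding G_def
  proof (rule wage_update_in_wage_set[OF that])
    show "e x j = 0" if "k j = 0" for j
      using nonneg[OF \<open>x \<in> wage_set k B\<close>, of j] that by (simp add: e_def p_def)
  qed (use \<open>0 < B\<close> e_nonneg in auto)
  have denom_pos: "0 < 1 + sum (e x) UNIV" for x
    using e_nonneg by (simp add: sum_nonneg add_pos_nonneg)
  have e_cont: "continuous_on (wage_set k B) (\<lambda>x. e x j)" for j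
    unfolding e_def by (intro continuous_intros cont)
  have G_cont: "continuous_on (wage_set k B) G"
    unfolding G_def using denom_pos[THEN less_imp_neq]
    by (intro continuous_intros e_cont) auto
  obtain x where x: "x \<in> wage_set k B" "G x = x"
    using brouwer[OF wage_set_compact wage_set_convex wage_set_nonempty G_cont] G_maps
      \<open>0 < k j0\<close> \<open>0 < B\<close> by (metis Pi_I less_imp_le)
  have "x$j * sum (e x) UNIV = B / real (k j) * e x j" for j
  proof -
    have "x$j = (x$j + B / real (k j) * e x j) / (1 + sum (e x) UNIV)"
      using arg_cong[OF x(2), of "\<lambda>y. y$j"] by (simp add: G_def)
    then have "x$j * (1 + sum (e x) UNIV) = x$j + B / real (k j) * e x j"
      using denom_pos[of x] by (simp add: eq_divide_eq)
    then show ?thesis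
      by (simp add: algebra_simps)
  qed
  then have "(\<lambda>j. F j x) = p"
    using total zero x(1) p_sum
    by (intro shares_eq_of_fixed_point[where x = x and c = "\<lambda>j. B / real (k j)"])
      (auto simp: e_def p_nonneg)
  then show thesis
    using x(1) by (intro that) (auto simp: p_def fun_eq_iff)
qed

section \<open>Equilibria\<close>

lemma soft_choice_clearing_wages:
  fixes u :: "'m::finite \<Rightarrow> 'n::finite \<Rightarrow> real^'n \<Rightarrow> real"
  assumes u_nonneg: "\<And>i j x. x \<in> wage_set k B \<Longrightarrow> 0 \<le> u i j x"
    and u_cont: "\<And>i j. continuous_on (wage_set k B) (u i j)"
    and u_zero: "\<And>i j x. x \<in> wage_set k B \<Longrightarrow> x$j = 0 \<Longrightarrow> u i j x = 0"
    and k_sum: "(\<Sum>j\<in>UNIV. k j) = CARD('m)" and "0 < B" and "0 < \<epsilon>"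
  obtains x where "x \<in> wage_set k B"
    "\<And>i. (\<Sum>j\<in>UNIV. soft_choice (u i) \<epsilon> j x) = 1"
    "\<And>j. (\<Sum>i\<in>UNIV. soft_choice (u i) \<epsilon> j x) = real (k j)"
proof -
  let ?c = "\<lambda>i j x. soft_choice (u i) \<epsilon> j x"
  have nonneg: "\<And>l. 0 \<le> x$l" if "x \<in> wage_set k B" for x
    using that by (simp add: wage_set_def)
  have weight_pos: "0 < (\<Sum>l\<in>UNIV. soft_weight (u i) \<epsilon> l x)" if "x \<in> wage_set k B" for i x
    using nonneg[OF that] wage_set_ex_pos[OF that] \<open>0 < B\<close> \<open>0 < \<epsilon>\<close> u_nonneg[OF that] u_zero[OF that]
    by (intro sum_soft_weight_pos) auto
  have rows: "(\<Sum>j\<in>UNIV. ?c i j x) = 1" if "x \<in> wage_set k B" for i x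
    using weight_pos[OF that] by (rule sum_soft_choice)
  have "(\<Sum>j\<in>UNIV. k j) \<noteq> 0"
    using k_sum by simp
  then obtain j0 where "k j0 \<noteq> 0"
    using sum.neutral[of UNIV k] by force
  obtain x where x: "x \<in> wage_set k B"
    and clear: "\<And>j. (\<Sum>i\<in>UNIV. ?c i j x) / real CARD('m) = real (k j) / real (\<Sum>l\<in>UNIV. k l)"
  proof (rule market_clearing_wages[of k B "\<lambda>j x. (\<Sum>i\<in>UNIV. ?c i j x) / real CARD('m)" j0])
    show "continuous_on (wage_set k B) (\<lambda>x. (\<Sum>i\<in>UNIV. ?c i j x) / real CARD('m))" for j
      using weight_pos by (intro continuous_intros continuous_on_soft_choice u_cont) auto
    show "0 \<le> (\<Sum>i\<in>UNIV. ?c i j x) / real CARD('m)" if "x \<in> wage_set k B" for j x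
      using nonneg[OF that] by (simp add: soft_choice_nonneg sum_nonneg)
    show "(\<Sum>j\<in>UNIV. (\<Sum>i\<in>UNIV. ?c i j x) / real CARD('m)) = 1" if "x \<in> wage_set k B" for x
      using rows[OF that] by (simp add: sum.swap[of _ UNIV UNIV] flip: sum_divide_distrib)
    show "(\<Sum>i\<in>UNIV. ?c i j x) / real CARD('m) = 0" if "x$j = 0" for j x
      using that by (simp add: soft_choice_eq_0)
  qed (use \<open>0 < B\<close> \<open>k j0 \<noteq> 0\<close> in auto)
  have cols: "(\<Sum>i\<in>UNIV. ?c i j x) = real (k j)" for j
    using clear[of j] by (simp add: k_sum)
  show thesis
    using x rows[OF x] cols by (rule that)
qed

lemma approximate_equilibrium:
  fixes u :: "'m::finite \<Rightarrow> 'n::finite \<Rightarrow> real^'n \<Rightarrow> real"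
  assumes "\<And>i j x. x \<in> wage_set k B \<Longrightarrow> 0 \<le> u i j x"
    and "\<And>i j. continuous_on (wage_set k B) (u i j)"
    and "\<And>i j x. x \<in> wage_set k B \<Longrightarrow> x$j = 0 \<Longrightarrow> u i j x = 0"
    and "(\<Sum>j\<in>UNIV. k j) = CARD('m)" and "0 < B" and "0 < \<epsilon>"
  obtains x \<sigma> where "x \<in> wage_set k B" "\<And>j. card {i. \<sigma> i = j} = k j"
    "\<And>i l. u i l x - \<epsilon> \<le> u i (\<sigma> i) x"
proof -
  obtain x where x: "x \<in> wage_set k B"
    and rows: "\<And>i. (\<Sum>j\<in>UNIV. soft_choice (u i) \<epsilon> j x) = 1"
    and cols: "\<And>j. (\<Sum>i\<in>UNIV. soft_choice (u i) \<epsilon> j x) = real (k j)"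
    by (rule soft_choice_clearing_wages[where u = u, OF assms]) auto
  have "0 \<le> soft_choice (u i) \<epsilon> j x" for i j
    using x by (simp add: soft_choice_nonneg wage_set_def)
  then obtain \<sigma> where \<sigma>: "\<And>i. 0 < soft_choice (u i) \<epsilon> (\<sigma> i) x" "\<And>j. card {i. \<sigma> i = j} = k j"
    using rows cols by (rule fractional_assignment_rounding) auto
  have "u i l x - \<epsilon> \<le> u i (\<sigma> i) x" for i l
    using soft_choice_nonzero_imp[of "u i" \<epsilon> "\<sigma> i" x l] \<sigma>(1)[of i] by simp
  then show thesis
    using that x \<sigma>(2) by blast
qed

lemma compact_subsequence_finite_label:
  fixes X :: "nat \<Rightarrow> 'a::metric_space" and Y :: "nat \<Rightarrow> 'b::finite"
  assumes "compact K" "\<And>n. X n \<in> K"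
  obtains x y r where "x \<in> K" "strict_mono r" "(X \<circ> r) \<longlonglongrightarrow> x" "\<And>n. Y (r n) = y"
proof -
  obtain y where "infinite (Y -` {y})"
    using inf_img_fin_domE[of Y UNIV] by auto
  then obtain r1 :: "nat \<Rightarrow> nat" where r1: "strict_mono r1" "\<And>n. Y (r1 n) = y"
    using infinite_enumerate by blast
  obtain x r2 where "x \<in> K" "strict_mono r2" "((X \<circ> r1) \<circ> r2) \<longlonglongrightarrow> x"
    using seq_compactE[OF compact_imp_seq_compact[OF \<open>compact K\<close>], of "X \<circ> r1"] assms(2) by auto
  then show thesis
    using r1 by (intro that[of x "r1 \<circ> r2" y]) (auto simp: strict_mono_o o_assoc)
qed

lemma le_at_limit_if_approx_le:
  assumes "continuous_on S f" "continuous_on S g" "\<And>n. X n \<in> S" "X \<longlonglongrightarrow> x" "x \<in> S"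
    and "\<delta> \<longlonglongrightarrow> 0" "\<And>n. f (X n) - \<delta> n \<le> g (X n)"
  shows "f x \<le> (g x :: real)"
proof -
  have "(\<lambda>n. f (X n) - \<delta> n) \<longlonglongrightarrow> f x - 0"
    using assms by (intro tendsto_diff continuous_on_tendsto_compose[of S f]) auto
  moreover have "(\<lambda>n. g (X n)) \<longlonglongrightarrow> g x"
    using assms by (intro continuous_on_tendsto_compose[of S g]) auto
  ultimately show ?thesis
    using assms(7) by (intro tendsto_le[OF trivial_limit_sequentially]) auto
qed

lemma equilibrium_on_wage_set:
  fixes u :: "'m::finite \<Rightarrow> 'n::finite \<Rightarrow> real^'n \<Rightarrow> real"
  assumes "\<And>i j x. x \<in> wage_set k B \<Longrightarrow> 0 \<le> u i j x"
    and u_cont: "\<And>i j. continuous_on (wage_set k B) (u i j)"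
    and "\<And>i j x. x \<in> wage_set k B \<Longrightarrow> x$j = 0 \<Longrightarrow> u i j x = 0"
    and "(\<Sum>j\<in>UNIV. k j) = CARD('m)" and "0 < B"
  obtains x \<sigma> where "x \<in> wage_set k B" "\<And>j. card {i. \<sigma> i = j} = k j"
    "\<And>i l. u i l x \<le> u i (\<sigma> i) x"
proof -
  have "\<exists>x \<sigma>. x \<in> wage_set k B \<and> (\<forall>j. card {i. \<sigma> i = j} = k j) \<and>
          (\<forall>i l. u i l x - inverse (real (Suc n)) \<le> u i (\<sigma> i) x)" for n
  proof -
    obtain x \<sigma> where "x \<in> wage_set k B" "\<And>j. card {i. \<sigma> i = j} = k j"
      "\<And>i l. u i l x - inverse (real (Suc n)) \<le> u i (\<sigma> i) x"
      by (rule approximate_equilibrium[where u = u and \<epsilon> = "inverse (real (Suc n))", OF assms])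
        auto
    then show ?thesis by blast
  qed
  then obtain X \<Sigma> where X: "\<And>n. X n \<in> wage_set k B" "\<And>n j. card {i. \<Sigma> n i = j} = k j"
      "\<And>n i l. u i l (X n) - inverse (real (Suc n)) \<le> u i (\<Sigma> n i) (X n)"
    by metis
  obtain x \<sigma> r where x: "x \<in> wage_set k B"
    and r: "strict_mono r" "(X \<circ> r) \<longlonglongrightarrow> x" "\<And>n. \<Sigma> (r n) = \<sigma>"
    by (rule compact_subsequence_finite_label[where X = X and Y = \<Sigma>, OF wage_set_compact X(1)])
      blast
  have "(\<lambda>n. inverse (real (Suc (r n)))) \<longlonglongrightarrow> 0"
    using LIMSEQ_subseq_LIMSEQ[OF LIMSEQ_inverse_real_of_nat r(1)] by (simp add: o_def)
  moreover have "u i l (X (r n)) - inverse (real (Suc (r n))) \<le> u i (\<sigma> i) (X (r n))" for i l n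
    using X(3)[of i l "r n"] r(3)[of n] by simp
  ultimately have "u i l x \<le> u i (\<sigma> i) x" for i l
    using u_cont X(1) r x
    by (intro le_at_limit_if_approx_le[of "wage_set k B" _ _ "X \<circ> r" x]) (auto simp: o_def)
  then show thesis
    using that x X(2)[of "r 0"] r(3)[of 0] by blast
qed

theorem theorem2p5:
  fixes u :: "'m::finite \<Rightarrow> 'n::finite \<Rightarrow> real^'n \<Rightarrow> real"
    and k :: "'n \<Rightarrow> nat"
    and B :: real
  assumes u_nonneg: "\<And>i j x. (\<forall>l. x $ l \<ge> 0) \<Longrightarrow> u i j x \<ge> 0"
    and u_cont: "\<And>i j. continuous_on {x. \<forall>l. x $ l \<ge> 0} (u i j)"
    and u_zero: "\<And>i j x. (\<forall>l. x $ l \<ge> 0) \<Longrightarrow> x $ j = 0 \<Longrightarrow> u i j x = 0"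
    and k_sum: "(\<Sum>j\<in>UNIV. k j) = CARD('m)"
    and B_pos: "B > 0"
  shows "\<exists>x :: real^'n. \<exists>\<sigma> :: 'm \<Rightarrow> 'n.
           (\<forall>j. x $ j \<ge> 0) \<and>
           (\<Sum>j\<in>UNIV. real (k j) * x $ j) = B \<and>
           (\<forall>j. card {i. \<sigma> i = j} = k j) \<and>
           (\<forall>i j'. u i (\<sigma> i) x \<ge> u i j' x)"
proof -
  have W_nonneg: "wage_set k B \<subseteq> {x. \<forall>l. x $ l \<ge> 0}"
    by (auto simp: wage_set_def)
  have cont: "continuous_on (wage_set k B) (u i j)" for i j
    using u_cont W_nonneg by (rule continuous_on_subset)
  have nonneg: "0 \<le> u i j x" and zero: "x $ j = 0 \<Longrightarrow> u i j x = 0" if "x \<in> wage_set k B" for i j x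
    using that W_nonneg u_nonneg u_zero by auto
  obtain x \<sigma> where "x \<in> wage_set k B" "\<And>j. card {i. \<sigma> i = j} = k j"
    "\<And>i l. u i l x \<le> u i (\<sigma> i) x"
    by (rule equilibrium_on_wage_set[where u = u, OF nonneg cont zero k_sum B_pos]) auto
  then show ?thesis
    by (auto simp: wage_set_def)
qed

end
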